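(* Let $(\sigma_i)_{i\in\mathbb{N}}$ be i.i.d. copies of $\sigma_0$. Fix $k\in\mathbb{N}$ and let $(\ell_i)$, $(\delta_i)$ be positive sequences with $\ell_i\to\infty$. Then there exists $c>0$ such that, for all sufficiently large $i$, \[ \mathbf{P}\big(S_i^{(k)}>\ell_i\delta_i\,\big|\,\sigma_1,\dots,\sigma_i\le\ell_i\big)<c\,\delta_i^{-1}\,i^k\,\mathbf{E}\Big[\Big(\frac{\sigma_0}{\ell_i}\Big)^{1/k}\mathbf{1}_{\{\sigma_0\le\ell_i\}}\Big]^k. \]
   Context: $\sigma_0$ is a strictly positive random variable under $\mathbf{P}$ with $L(u):=1/\mathbf{P}(\sigma_0>u)$ slowly varying ($\lim_{u\to\infty}L(uv)/L(u)=1$ for all $v>0$). For an index $i$, let $\sigma_i^{(1)}\ge\sigma_i^{(2)}\ge\dots\ge\sigma_i^{(i)}$ be the descending order statistics of $(\sigma_j)_{1\le j\le i}$, and $S_i^{(k)}:=\sum_{j=k}^{i}\sigma_i^{(j)}$ (the sum with the $k-1$ largest terms removed). *)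

theory Defs
  imports "HOL-Probability.Probability"
begin

definition trimmed_sum :: "nat \<Rightarrow> real list \<Rightarrow> real" where
  "trimmed_sum k xs = sum_list (drop (k - 1) (rev (sort xs)))"

definition S_trim :: "(nat \<Rightarrow> 'a \<Rightarrow> real) \<Rightarrow> nat \<Rightarrow> nat \<Rightarrow> 'a \<Rightarrow> real" where
  "S_trim \<sigma> i k \<omega> = trimmed_sum k (map (\<lambda>j. \<sigma> j \<omega>) [1..<Suc i])"

definition slowly_varying :: "(real \<Rightarrow> real) \<Rightarrow> bool" where
  "slowly_varying L \<longleftrightarrow> (\<forall>v>0. ((\<lambda>u. L (u * v) / L u) \<longlongrightarrow> 1) at_top)"

end

theory Submission
  imports Defs
begin

text \<open>
  If x_1, ..., x_i lie in [0,l], every x_p that survives the removal of the k-1 largest values is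
  bounded by each removed one, so x_p <= l * prod_{j in T} (x_j/l)^(1/k) for the k-set T formed by p and
  the removed indices; summing over p gives S^(k) <= l * sum_{|T|=k} prod_{j in T} (x_j/l)^(1/k).
  On the event that all sigma_j <= l, the summand for T is a product over all j of the truncated root
  (on T) and of the indicator of sigma_j <= l (off T). By independence it has expectation m^k p^(i-k),
  with m the truncated moment and p = P(sigma_0 <= l). Markov's inequality and P(all sigma_j <= l) = p^i
  bound the conditional probability by (i choose k) m^k / (delta p^k), and p -> 1 as l -> infinity.
\<close>

lemma sort_map_eq_map_sort_key: "sort (map f xs) = map f (sort_key f xs)"
  by (rule properties_for_sort) (simp_all add: sorted_sort_key)

lemma trimmed_sum_eq_sum_lower_part:
  fixes x :: "'b \<Rightarrow> real"
  assumes "distinct js"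
  obtains L R where "L \<inter> R = {}" "L \<union> R = set js" "card R = min (k - 1) (length js)"
    "\<forall>p\<in>L. \<forall>q\<in>R. x p \<le> x q" "trimmed_sum k (map x js) = sum x L"
proof
  define ys where "ys = sort_key x js"
  define a where "a = length js - (k - 1)"
  have ys: "distinct ys" "set ys = set js" "length ys = length js" "sorted (map x ys)"
    using assms by (simp_all add: ys_def distinct_sort sorted_sort_key)
  then have "distinct (take a ys @ drop a ys)" "set (take a ys @ drop a ys) = set js"
    by simp_all
  then show "set (take a ys) \<inter> set (drop a ys) = {}" "set (take a ys) \<union> set (drop a ys) = set js"
    by (simp_all only: distinct_append set_append)
  show "card (set (drop a ys)) = min (k - 1) (length js)"
    using ys by (simp add: distinct_card a_def)
  have "sorted (map x (take a ys) @ map x (drop a ys))"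
    using ys by (simp flip: map_append)
  then show "\<forall>p\<in>set (take a ys). \<forall>q\<in>set (drop a ys). x p \<le> x q"
    by (auto simp: sorted_append)
  have "trimmed_sum k (map x js) = sum_list (take a (map x ys))"
    by (simp add: trimmed_sum_def drop_rev sort_map_eq_map_sort_key ys_def a_def)
  also have "\<dots> = sum x (set (take a ys))"
    using ys by (simp add: take_map sum_list_distinct_conv_sum_set)
  finally show "trimmed_sum k (map x js) = sum x (set (take a ys))" .
qed

lemma le_mult_prod_powr_root:
  fixes x :: "'b \<Rightarrow> real"
  assumes k: "k \<ge> 1" and l: "l > 0" and xp: "0 \<le> x p" "x p \<le> l"
    and R: "finite R" "card R = k - 1" "p \<notin> R" and below: "\<forall>q\<in>R. x p \<le> x q"
  shows "x p \<le> l * (\<Prod>j\<in>insert p R. (x j / l) powr (1 / real k))"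
proof -
  define u where "u j = (x j / l) powr (1 / real k)" for j
  have "u p ^ k = x p / l"
  proof (cases "x p = 0")
    case False
    then have "0 < x p / l" using l xp by simp
    then have "u p ^ k = ((x p / l) powr (1 / real k)) powr real k"
      unfolding u_def by (subst powr_realpow) auto
    also have "\<dots> = x p / l"
      using k l xp \<open>0 < x p / l\<close> by (simp add: powr_powr)
    finally show ?thesis .
  qed (use k in \<open>simp add: u_def\<close>)
  then have "x p = l * (u p * u p ^ (k - 1))"
    using k l by (simp add: power_eq_if split: if_splits)
  also have "u p ^ (k - 1) \<le> (\<Prod>j\<in>R. u j)"
  proof -
    have "(\<Prod>j\<in>R. u p) \<le> (\<Prod>j\<in>R. u j)"
      using below l xp by (intro prod_mono) (auto simp: u_def intro!: powr_mono2 divide_right_mono)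
    then show ?thesis using R by simp
  qed
  finally show ?thesis
    using l R by (simp add: u_def mult_left_mono)
qed

lemma trimmed_sum_le_sum_card_subsets:
  fixes x :: "'b \<Rightarrow> real"
  assumes k: "k \<ge> 1" and l: "l > 0" and js: "distinct js"
    and x: "\<And>j. j \<in> set js \<Longrightarrow> 0 \<le> x j \<and> x j \<le> l"
  shows "trimmed_sum k (map x js)
    \<le> l * (\<Sum>T\<in>{T. T \<subseteq> set js \<and> card T = k}. \<Prod>j\<in>T. (x j / l) powr (1 / real k))"
proof -
  define u where "u j = (x j / l) powr (1 / real k)" for j
  obtain L R where LR: "L \<inter> R = {}" "L \<union> R = set js" "card R = min (k - 1) (length js)"
    and below: "\<forall>p\<in>L. \<forall>q\<in>R. x p \<le> x q" and trim: "trimmed_sum k (map x js) = sum x L"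
    using trimmed_sum_eq_sum_lower_part [OF js] .
  have fin: "finite L" "finite R" using LR(2) by (metis finite_Un finite_set)+
  have cardR: "card R = k - 1" if "p \<in> L" for p
  proof -
    have "card L + card R = length js"
      using LR js by (metis card_Un_disjoint distinct_card finite_Un finite_set)
    then show ?thesis using that fin LR(3) by (cases "L = {}") (auto simp: card_gt_0_iff)
  qed
  have "sum x L \<le> (\<Sum>p\<in>L. l * (\<Prod>j\<in>insert p R. u j))"
    unfolding u_def using x LR below fin(2) cardR
    by (intro sum_mono le_mult_prod_powr_root [OF k l]) auto
  also have "\<dots> = l * (\<Sum>T\<in>(\<lambda>p. insert p R) ` L. \<Prod>j\<in>T. u j)"
  proof -
    have "inj_on (\<lambda>p. insert p R) L"
      using LR(1) by (auto intro!: inj_onI)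
    then show ?thesis by (simp add: sum.reindex sum_distrib_left)
  qed
  also have "\<dots> \<le> l * (\<Sum>T\<in>{T. T \<subseteq> set js \<and> card T = k}. \<Prod>j\<in>T. u j)"
  proof (intro mult_left_mono sum_mono2)
    show "(\<lambda>p. insert p R) ` L \<subseteq> {T. T \<subseteq> set js \<and> card T = k}"
      using LR fin(2) cardR k by (auto simp: card_insert_if)
  qed (use l in \<open>auto simp: u_def intro: prod_nonneg\<close>)
  finally show ?thesis
    unfolding trim u_def .
qed

lemma binomial_mult_power_le:
  fixes p :: real
  assumes "1 / 2 \<le> p"
  shows "real (n choose k) * p ^ (n - k) \<le> 2 ^ k * real n ^ k * p ^ n"
proof (cases "k \<le> n")
  case True
  have "1 \<le> (2 * p) ^ k"
    using assms by (intro one_le_power) simp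
  then have "p ^ (n - k) \<le> p ^ (n - k) * (2 * p) ^ k"
    using assms by simp
  also have "\<dots> = 2 ^ k * p ^ n"
    using True by (simp add: power_mult_distrib mult_ac flip: power_add)
  finally have "p ^ (n - k) \<le> 2 ^ k * p ^ n" .
  moreover have "real (n choose k) \<le> real n ^ k"
    using binomial_le_pow [OF True] by (simp flip: of_nat_power)
  ultimately have "real (n choose k) * p ^ (n - k) \<le> real n ^ k * (2 ^ k * p ^ n)"
    using assms by (intro mult_mono) auto
  then show ?thesis
    by (simp add: mult_ac)
qed (use assms in \<open>simp add: binomial_eq_0\<close>)

lemma prod_if_mem_eq_power:
  assumes "finite I" and "T \<subseteq> I"
  shows "(\<Prod>j\<in>I. if j \<in> T then a else b) = a ^ card T * b ^ (card I - card T)"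
proof -
  have "I \<inter> - T = I - T" by blast
  then show ?thesis
    using assms by (simp add: prod.If_cases Int_absorb1 card_Diff_subset finite_subset)
qed

text \<open>The guard 0 < x avoids powr at nonpositive arguments, where it has junk values; since
  sigma_0 > 0 almost surely it does not affect the truncated moment.\<close>
definition root_below :: "nat \<Rightarrow> real \<Rightarrow> real \<Rightarrow> real" where
  "root_below k l x = (if 0 < x \<and> x \<le> l then (x / l) powr (1 / real k) else 0)"

lemma borel_measurable_root_below [measurable]: "root_below k l \<in> borel_measurable borel"
  unfolding root_below_def by measurable

lemma root_below_nonneg: "0 \<le> root_below k l x"
  by (simp add: root_below_def)

lemma root_below_le_one: "root_below k l x \<le> 1"
  by (auto simp: root_below_def intro!: powr_le1)

definition trim_factor :: "nat \<Rightarrow> real \<Rightarrow> nat set \<Rightarrow> nat \<Rightarrow> real \<Rightarrow> real" where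
  "trim_factor k l T j = (if j \<in> T then root_below k l else indicator {..l})"

lemma borel_measurable_trim_factor [measurable]: "trim_factor k l T j \<in> borel_measurable borel"
  by (simp add: trim_factor_def)

lemma trim_factor_nonneg: "0 \<le> trim_factor k l T j x"
  by (simp add: trim_factor_def root_below_nonneg)

lemma abs_trim_factor_le_one: "\<bar>trim_factor k l T j x\<bar> \<le> 1"
  by (simp add: trim_factor_def root_below_nonneg root_below_le_one)

lemma trimmed_sum_le_sum_prod_trim_factor:
  fixes x :: "nat \<Rightarrow> real"
  assumes k: "k \<ge> 1" and l: "l > 0" and x: "\<forall>j\<in>{1..i}. 0 < x j \<and> x j \<le> l"
  shows "trimmed_sum k (map x [1..<Suc i])
    \<le> l * (\<Sum>T\<in>{T. T \<subseteq> {1..i} \<and> card T = k}. \<Prod>j\<in>{1..i}. trim_factor k l T j (x j))"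
proof -
  have "\<And>j. j \<in> set [1..<Suc i] \<Longrightarrow> 0 \<le> x j \<and> x j \<le> l"
    using x by (auto simp del: upt_Suc intro: less_imp_le)
  then have "trimmed_sum k (map x [1..<Suc i])
      \<le> l * (\<Sum>T\<in>{T. T \<subseteq> {1..i} \<and> card T = k}. \<Prod>j\<in>T. (x j / l) powr (1 / real k))"
    using trimmed_sum_le_sum_card_subsets [OF k l, of "[1..<Suc i]" x]
    by (simp add: atLeastLessThanSuc_atLeastAtMost del: upt_Suc)
  also have "\<dots> = l * (\<Sum>T\<in>{T. T \<subseteq> {1..i} \<and> card T = k}. \<Prod>j\<in>{1..i}. trim_factor k l T j (x j))"
  proof (intro arg_cong [where f = "(*) l"] sum.cong refl)
    fix T assume "T \<in> {T. T \<subseteq> {1..i} \<and> card T = k}"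
    then have "(\<Prod>j\<in>T. (x j / l) powr (1 / real k))
        = (\<Prod>j\<in>{1..i}. if j \<in> T then (x j / l) powr (1 / real k) else 1)"
      by (simp add: prod.If_cases Int_absorb1)
    also have "\<dots> = (\<Prod>j\<in>{1..i}. trim_factor k l T j (x j))"
      using x by (intro prod.cong) (auto simp: trim_factor_def root_below_def)
    finally show "(\<Prod>j\<in>T. (x j / l) powr (1 / real k)) = \<dots>" .
  qed
  finally show ?thesis .
qed

locale iid_sequence = prob_space M for M :: "'a measure" +
  fixes \<sigma>0 :: "'a \<Rightarrow> real" and \<sigma> :: "nat \<Rightarrow> 'a \<Rightarrow> real"
  assumes measurable_\<sigma>0 [measurable]: "\<sigma>0 \<in> borel_measurable M"
    and measurable_\<sigma> [measurable]: "\<And>i. \<sigma> i \<in> borel_measurable M"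
    and indep_\<sigma>: "indep_vars (\<lambda>_. borel) \<sigma> UNIV"
    and distr_\<sigma>: "\<And>i. distr M borel (\<sigma> i) = distr M borel \<sigma>0"
begin

abbreviation law :: "real measure" where
  "law \<equiv> distr M borel \<sigma>0"

lemma real_distribution_law: "real_distribution law"
  by (auto simp: real_distribution_def real_distribution_axioms_def intro!: prob_space_distr)

lemma integral_comp_\<sigma>:
  fixes f :: "real \<Rightarrow> real"
  assumes [measurable]: "f \<in> borel_measurable borel"
  shows "(\<integral>\<omega>. f (\<sigma> j \<omega>) \<partial>M) = (\<integral>x. f x \<partial>law)"
proof -
  have "(\<integral>\<omega>. f (\<sigma> j \<omega>) \<partial>M) = (\<integral>x. f x \<partial>distr M borel (\<sigma> j))"
    by (rule integral_distr [symmetric]) auto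
  then show ?thesis by (simp only: distr_\<sigma>)
qed

lemma AE_\<sigma>_pos:
  assumes "AE \<omega> in M. \<sigma>0 \<omega> > 0"
  shows "AE \<omega> in M. \<sigma> j \<omega> > 0"
proof -
  have "AE x in law. 0 < x" using assms by (subst AE_distr_iff) auto
  then have "AE x in distr M borel (\<sigma> j). 0 < x" by (simp only: distr_\<sigma>)
  then show ?thesis by (subst (asm) AE_distr_iff) auto
qed

lemma
  fixes f :: "nat \<Rightarrow> real \<Rightarrow> real"
  assumes J: "finite J" and f [measurable]: "\<And>j. f j \<in> borel_measurable borel"
    and bounded: "\<And>j x. \<bar>f j x\<bar> \<le> B"
  shows integrable_prod_comp_\<sigma>: "integrable M (\<lambda>\<omega>. \<Prod>j\<in>J. f j (\<sigma> j \<omega>))"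
    and integral_prod_comp_\<sigma>: "(\<integral>\<omega>. (\<Prod>j\<in>J. f j (\<sigma> j \<omega>)) \<partial>M) = (\<Prod>j\<in>J. \<integral>x. f j x \<partial>law)"
proof -
  have indep: "indep_vars (\<lambda>_. borel) (\<lambda>j \<omega>. f j (\<sigma> j \<omega>)) J"
    using indep_vars_compose2 [OF indep_vars_subset [OF indep_\<sigma> subset_UNIV] f] .
  have "integrable M (\<lambda>\<omega>. f j (\<sigma> j \<omega>))" for j
    using bounded by (intro integrable_const_bound [where B = B]) auto
  note * = indep_vars_integrable [OF J indep this] indep_vars_lebesgue_integral [OF J indep this]
  then show "integrable M (\<lambda>\<omega>. \<Prod>j\<in>J. f j (\<sigma> j \<omega>))" by blast
  show "(\<integral>\<omega>. (\<Prod>j\<in>J. f j (\<sigma> j \<omega>)) \<partial>M) = (\<Prod>j\<in>J. \<integral>x. f j x \<partial>law)"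
    using * by (simp add: integral_comp_\<sigma> [OF f])
qed

lemma prob_all_\<sigma>_le:
  assumes "finite J"
  shows "prob {\<omega> \<in> space M. \<forall>j\<in>J. \<sigma> j \<omega> \<le> l} = measure law {..l} ^ card J"
proof (cases "J = {}")
  case False
  have "{\<omega> \<in> space M. \<forall>j\<in>J. \<sigma> j \<omega> \<le> l} = (\<Inter>j\<in>J. \<sigma> j -` {..l} \<inter> space M)"
    using False by auto
  also have "prob \<dots> = (\<Prod>j\<in>J. prob (\<sigma> j -` {..l} \<inter> space M))"
    using assms False by (intro indep_varsD [OF indep_\<sigma>]) auto
  also have "\<dots> = (\<Prod>j\<in>J. measure law {..l})"
  proof (rule prod.cong [OF refl])
    fix j
    have "prob (\<sigma> j -` {..l} \<inter> space M) = measure (distr M borel (\<sigma> j)) {..l}"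
      by (simp add: measure_distr)
    then show "prob (\<sigma> j -` {..l} \<inter> space M) = measure law {..l}"
      by (simp only: distr_\<sigma>)
  qed
  finally show ?thesis by simp
qed (simp add: prob_space)

lemma integral_prod_trim_factor:
  assumes "T \<subseteq> {1..i}" and "card T = k"
  shows "(\<integral>\<omega>. (\<Prod>j\<in>{1..i}. trim_factor k l T j (\<sigma> j \<omega>)) \<partial>M)
    = (\<integral>x. root_below k l x \<partial>law) ^ k * measure law {..l} ^ (i - k)"
proof -
  have "(\<integral>\<omega>. (\<Prod>j\<in>{1..i}. trim_factor k l T j (\<sigma> j \<omega>)) \<partial>M)
      = (\<Prod>j\<in>{1..i}. \<integral>x. trim_factor k l T j x \<partial>law)"
    by (rule integral_prod_comp_\<sigma> [OF _ _ abs_trim_factor_le_one]) auto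
  also have "\<dots> = (\<Prod>j\<in>{1..i}. if j \<in> T then (\<integral>x. root_below k l x \<partial>law) else measure law {..l})"
    by (intro prod.cong) (simp_all add: trim_factor_def)
  finally show ?thesis
    using assms by (simp add: prod_if_mem_eq_power)
qed

lemma prob_trimmed_sum_large_le:
  assumes pos: "AE \<omega> in M. \<sigma>0 \<omega> > 0" and k: "k \<ge> 1" and l: "l > 0" and d: "d > 0"
  shows "prob {\<omega> \<in> space M. l * d < S_trim \<sigma> i k \<omega> \<and> (\<forall>j\<in>{1..i}. \<sigma> j \<omega> \<le> l)}
    \<le> real (i choose k) * (\<integral>x. root_below k l x \<partial>law) ^ k * measure law {..l} ^ (i - k) / d"
proof -
  define Ts where "Ts = {T. T \<subseteq> {1..i} \<and> card T = k}"
  define R where "R \<omega> = (\<Sum>T\<in>Ts. \<Prod>j\<in>{1..i}. trim_factor k l T j (\<sigma> j \<omega>)) / d" for \<omega>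
  define E where "E = {\<omega> \<in> space M. l * d < S_trim \<sigma> i k \<omega> \<and> (\<forall>j\<in>{1..i}. \<sigma> j \<omega> \<le> l)}"
  have R_nonneg: "0 \<le> R \<omega>" for \<omega>
    unfolding R_def using d trim_factor_nonneg
    by (intro divide_nonneg_pos sum_nonneg prod_nonneg) auto
  have prod_integrable: "integrable M (\<lambda>\<omega>. \<Prod>j\<in>{1..i}. trim_factor k l T j (\<sigma> j \<omega>))" for T
    by (rule integrable_prod_comp_\<sigma> [OF _ _ abs_trim_factor_le_one]) auto
  then have R_integrable: "integrable M R"
    unfolding R_def by auto
  have "AE \<omega> in M. \<forall>j\<in>{1..i}. 0 < \<sigma> j \<omega>"
    by (intro AE_finite_allI AE_\<sigma>_pos [OF pos]) simp
  then have indicator_le_R: "AE \<omega> in M. indicator E \<omega> \<le> R \<omega>"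
  proof eventually_elim
    case (elim \<omega>)
    show ?case
    proof (cases "\<omega> \<in> E")
      case True
      then have "l * d < S_trim \<sigma> i k \<omega>" "\<forall>j\<in>{1..i}. 0 < \<sigma> j \<omega> \<and> \<sigma> j \<omega> \<le> l"
        using elim by (auto simp: E_def)
      then have "l * d < l * (d * R \<omega>)"
        using trimmed_sum_le_sum_prod_trim_factor [OF k l, of i "\<lambda>j. \<sigma> j \<omega>"] d
        by (simp add: S_trim_def R_def Ts_def)
      then show ?thesis using True l d by simp
    qed (simp add: R_nonneg)
  qed
  have "prob E = (\<integral>\<omega>. indicator E \<omega> \<partial>M)"
    by (simp add: E_def Int_absorb2)
  also have "\<dots> \<le> (\<integral>\<omega>. R \<omega> \<partial>M)"
    using R_integrable R_nonneg indicator_le_R by (intro integral_mono_AE') auto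
  also have "\<dots> = (\<Sum>T\<in>Ts. \<integral>\<omega>. (\<Prod>j\<in>{1..i}. trim_factor k l T j (\<sigma> j \<omega>)) \<partial>M) / d"
    unfolding R_def using prod_integrable by simp
  also have "\<dots> = (\<Sum>T\<in>Ts. (\<integral>x. root_below k l x \<partial>law) ^ k * measure law {..l} ^ (i - k)) / d"
    unfolding Ts_def by (intro arg_cong [where f = "\<lambda>x. x / d"] sum.cong refl integral_prod_trim_factor) auto
  finally show ?thesis
    unfolding E_def Ts_def by (simp add: n_subsets mult_ac)
qed

lemma cond_prob_trimmed_sum_large_le:
  assumes pos: "AE \<omega> in M. \<sigma>0 \<omega> > 0" and k: "k \<ge> 1" and l: "l > 0" and d: "d > 0"
    and half: "1 / 2 \<le> measure law {..l}"
  shows "\<P>(\<omega> in M. l * d < S_trim \<sigma> i k \<omega> \<bar> (\<forall>j\<in>{1..i}. \<sigma> j \<omega> \<le> l))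
    \<le> 2 ^ k * real i ^ k * (\<integral>x. root_below k l x \<partial>law) ^ k / d"
proof -
  define m where "m = (\<integral>x. root_below k l x \<partial>law)"
  define p where "p = measure law {..l}"
  have "m \<ge> 0" unfolding m_def by (simp add: root_below_nonneg)
  have "p > 0" using half by (simp add: p_def)
  have "\<P>(\<omega> in M. l * d < S_trim \<sigma> i k \<omega> \<bar> (\<forall>j\<in>{1..i}. \<sigma> j \<omega> \<le> l))
      = prob {\<omega> \<in> space M. l * d < S_trim \<sigma> i k \<omega> \<and> (\<forall>j\<in>{1..i}. \<sigma> j \<omega> \<le> l)} / p ^ i"
    unfolding cond_prob_def using prob_all_\<sigma>_le [of "{1..i}" l] by (simp add: p_def)
  also have "\<dots> \<le> real (i choose k) * m ^ k * p ^ (i - k) / d / p ^ i"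
    using prob_trimmed_sum_large_le [OF pos k l d, of i] \<open>p > 0\<close>
    by (intro divide_right_mono) (simp_all add: m_def p_def)
  also have "\<dots> = m ^ k * (real (i choose k) * p ^ (i - k)) / (d * p ^ i)"
    by (simp add: field_simps)
  also have "\<dots> \<le> m ^ k * (2 ^ k * real i ^ k * p ^ i) / (d * p ^ i)"
    using binomial_mult_power_le [OF half, of i k] \<open>m \<ge> 0\<close> \<open>p > 0\<close> d
    by (intro divide_right_mono mult_left_mono) (auto simp: p_def)
  also have "\<dots> = 2 ^ k * real i ^ k * m ^ k / d"
    using \<open>p > 0\<close> by (simp add: field_simps)
  finally show ?thesis unfolding m_def .
qed

lemma expectation_eq_integral_root_below:
  assumes "AE \<omega> in M. \<sigma>0 \<omega> > 0"
  shows "expectation (\<lambda>\<omega>. (\<sigma>0 \<omega> / l) powr (1 / real k) * indicator {..l} (\<sigma>0 \<omega>))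
    = (\<integral>x. root_below k l x \<partial>law)"
proof -
  have "expectation (\<lambda>\<omega>. (\<sigma>0 \<omega> / l) powr (1 / real k) * indicator {..l} (\<sigma>0 \<omega>))
      = expectation (\<lambda>\<omega>. root_below k l (\<sigma>0 \<omega>))"
    using assms by (intro integral_cong_AE) (auto simp: root_below_def elim!: eventually_mono)
  also have "\<dots> = (\<integral>x. root_below k l x \<partial>law)"
    by (rule integral_distr [symmetric]) auto
  finally show ?thesis .
qed

lemma integral_root_below_pos:
  assumes pos: "AE \<omega> in M. \<sigma>0 \<omega> > 0" and "measure law {..l} > 0"
  shows "(\<integral>x. root_below k l x \<partial>law) > 0"
proof (rule ccontr)
  interpret law: real_distribution law
    by (rule real_distribution_law)
  assume "\<not> (\<integral>x. root_below k l x \<partial>law) > 0"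
  moreover have "0 \<le> (\<integral>x. root_below k l x \<partial>law)"
    by (simp add: root_below_nonneg)
  ultimately have "(\<integral>x. root_below k l x \<partial>law) = 0"
    by simp
  then have "AE x in law. root_below k l x = 0"
    using root_below_nonneg root_below_le_one
    by (subst (asm) integral_nonneg_eq_0_iff_AE) (auto intro: law.integrable_const_bound [where B = 1])
  moreover have "AE x in law. 0 < x"
    using pos by (subst AE_distr_iff) auto
  ultimately have "AE x in law. \<not> x \<le> l"
    by eventually_elim (auto simp: root_below_def split: if_splits)
  then have "\<P>(x in law. x \<le> l) = 0"
    by (rule law.prob_eq_0_AE)
  then have "measure law {..l} = 0"
    by (simp add: atMost_def)
  with assms(2) show False by simp
qed

end

theorem lemma3p8:
  fixes M :: "'a measure" and \<sigma>0 :: "'a \<Rightarrow> real" and \<sigma> :: "nat \<Rightarrow> 'a \<Rightarrow> real"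
    and k :: nat and ell \<delta> :: "nat \<Rightarrow> real"
  assumes "prob_space M"
    and rv0: "\<sigma>0 \<in> borel_measurable M"
    and pos: "AE \<omega> in M. \<sigma>0 \<omega> > 0"
    and sv: "slowly_varying (\<lambda>u. 1 / \<P>(\<omega> in M. \<sigma>0 \<omega> > u))"
    and rv: "\<And>i. \<sigma> i \<in> borel_measurable M"
    and indep: "prob_space.indep_vars M (\<lambda>_. borel) \<sigma> UNIV"
    and ident: "\<And>i. distr M borel (\<sigma> i) = distr M borel \<sigma>0"
    and k: "k \<ge> 1"
    and lpos: "\<And>i. ell i > 0" and dpos: "\<And>i. \<delta> i > 0"
    and ltop: "filterlim ell at_top sequentially"
  shows "\<exists>c>0. \<forall>\<^sub>F i in sequentially.
     \<P>(\<omega> in M. S_trim \<sigma> i k \<omega> > ell i * \<delta> i \<bar> (\<forall>j\<in>{1..i}. \<sigma> j \<omega> \<le> ell i))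
       < c / \<delta> i * real i ^ k *
         (prob_space.expectation M
            (\<lambda>\<omega>. (\<sigma>0 \<omega> / ell i) powr (1 / real k) * indicator {..ell i} (\<sigma>0 \<omega>))) ^ k"
proof -
  interpret iid_sequence M \<sigma>0 \<sigma>
    using assms by (simp add: iid_sequence_def iid_sequence_axioms_def)
  interpret law: real_distribution law
    by (rule real_distribution_law)
  define m where "m i = (\<integral>x. root_below k (ell i) x \<partial>law)" for i
  have "((\<lambda>i. measure law {..ell i}) \<longlongrightarrow> 1) sequentially"
    using filterlim_compose [OF law.cdf_lim_at_top_prob ltop] by (simp add: cdf_def)
  then have "\<forall>\<^sub>F i in sequentially. 1 / 2 < measure law {..ell i}"
    by (rule order_tendstoD) simp
  then have "\<forall>\<^sub>F i in sequentially. 1 / 2 \<le> measure law {..ell i} \<and> 1 \<le> i"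
    using eventually_ge_at_top [of 1] by eventually_elim simp
  then have "\<forall>\<^sub>F i in sequentially.
      \<P>(\<omega> in M. S_trim \<sigma> i k \<omega> > ell i * \<delta> i \<bar> (\<forall>j\<in>{1..i}. \<sigma> j \<omega> \<le> ell i))
        < (2 ^ k + 1) / \<delta> i * real i ^ k * m i ^ k"
  proof eventually_elim
    case (elim i)
    have "0 < m i"
      using integral_root_below_pos [OF pos] elim unfolding m_def by simp
    then have "2 ^ k * real i ^ k * m i ^ k / \<delta> i < (2 ^ k + 1) / \<delta> i * real i ^ k * m i ^ k"
      using dpos [of i] elim by (simp add: field_simps)
    moreover have "\<P>(\<omega> in M. S_trim \<sigma> i k \<omega> > ell i * \<delta> i \<bar> (\<forall>j\<in>{1..i}. \<sigma> j \<omega> \<le> ell i))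
        \<le> 2 ^ k * real i ^ k * m i ^ k / \<delta> i"
      using cond_prob_trimmed_sum_large_le [OF pos k lpos dpos] elim unfolding m_def by blast
    ultimately show ?case by linarith
  qed
  moreover have "(0::real) < 2 ^ k + 1"
    by (simp add: add_pos_nonneg)
  ultimately show ?thesis
    unfolding m_def expectation_eq_integral_root_below [OF pos, symmetric] by blast
qed

end
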